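(* Let $m<M$ be real numbers and let $X$ be a random variable taking values in $[m,M]$, either discrete (taking finitely many values $x_1,\dots,x_n\in[m,M]$ with probabilities $p_1,\dots,p_n$) or continuous (with probability density $f$ on $[m,M]$). Let $\mu_1'$ be its mean and $\mu_2,\mu_3,\mu_4$ its second, third and fourth central moments, and assume $\mu_2\neq(\mu_1'-m)(M-\mu_1')$. Then $$\mu_4\le (\mu_1'-m)(M-\mu_1')\mu_2+(m+M-2\mu_1')\mu_3-\frac{\big(\mu_3-(m+M-2\mu_1')\mu_2\big)^2}{(\mu_1'-m)(M-\mu_1')-\mu_2}.$$
   Context: The mean is $\mu_1'=\sum_{i=1}^n p_i x_i$ (discrete case) or $\mu_1'=\int_m^M x f(x)\,dx$ (continuous case), where $\sum p_i=1$, resp. $\int_m^M f(x)\,dx=1$. The $r$-th central moment is $\mu_r=\sum_{i=1}^n p_i (x_i-\mu_1')^r$, resp. $\mu_r=\int_m^M (x-\mu_1')^r f(x)\,dx$. *)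

theory Defs
  imports "HOL-Analysis.Analysis"
begin

definition disc_mean :: "nat \<Rightarrow> (nat \<Rightarrow> real) \<Rightarrow> (nat \<Rightarrow> real) \<Rightarrow> real" where
  "disc_mean n p x = (\<Sum>i=1..n. p i * x i)"

definition disc_cmom :: "nat \<Rightarrow> nat \<Rightarrow> (nat \<Rightarrow> real) \<Rightarrow> (nat \<Rightarrow> real) \<Rightarrow> real" where
  "disc_cmom r n p x = (\<Sum>i=1..n. p i * (x i - disc_mean n p x) ^ r)"

definition cont_mean :: "real \<Rightarrow> real \<Rightarrow> (real \<Rightarrow> real) \<Rightarrow> real" where
  "cont_mean m M f = integral {m..M} (\<lambda>t. t * f t)"

definition cont_cmom :: "nat \<Rightarrow> real \<Rightarrow> real \<Rightarrow> (real \<Rightarrow> real) \<Rightarrow> real" where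
  "cont_cmom r m M f = integral {m..M} (\<lambda>t. (t - cont_mean m M f) ^ r * f t)"

definition mom4_bound :: "real \<Rightarrow> real \<Rightarrow> real \<Rightarrow> real \<Rightarrow> real \<Rightarrow> real" where
  "mom4_bound m M mu1 mu2 mu3 =
     (mu1 - m) * (M - mu1) * mu2 + (m + M - 2 * mu1) * mu3
     - (mu3 - (m + M - 2 * mu1) * mu2) ^ 2 / ((mu1 - m) * (M - mu1) - mu2)"

end

theory Submission
  imports Defs
begin

text \<open>The polynomial \<open>(M - x)(x - m)(x - \<mu> - c)\<^sup>2\<close> is nonnegative on \<open>[m, M]\<close>, so its
  expectation is nonnegative for every \<open>c\<close>. Expanded in powers of \<open>x - \<mu>\<close>, this expectation
  is a quadratic in \<open>c\<close> whose coefficients are \<open>\<mu>, \<mu>\<^sub>2, \<mu>\<^sub>3, \<mu>\<^sub>4\<close>; its value at the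
  vertex \<open>c = ((m + M - 2\<mu>)\<mu>\<^sub>2 - \<mu>\<^sub>3) / ((\<mu> - m)(M - \<mu>) - \<mu>\<^sub>2)\<close> being nonnegative is
  exactly the claimed bound. This only needs the leading coefficient
  \<open>(\<mu> - m)(M - \<mu>) - \<mu>\<^sub>2\<close> to be nonzero.\<close>

text \<open>The expectation of \<open>(M - X)(X - m)(X - \<mu> - c)\<^sup>2\<close> for a random variable \<open>X\<close> with mean
  \<open>\<mu>\<close> and central moments \<open>\<mu>\<^sub>2, \<mu>\<^sub>3, \<mu>\<^sub>4\<close>.\<close>

definition moment_quadratic :: "real \<Rightarrow> real \<Rightarrow> real \<Rightarrow> real \<Rightarrow> real \<Rightarrow> real \<Rightarrow> real \<Rightarrow> real" where
  "moment_quadratic m M mu mu2 mu3 mu4 c =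
     (mu - m) * (M - mu) * c^2 + ((mu - m) * (M - mu) - 2 * c * (m + M - 2 * mu) - c^2) * mu2
     + (m + M - 2 * mu + 2 * c) * mu3 - mu4"

lemma bounded_square_expansion:
  fixes m M mu c x :: real
  shows "(M - x) * (x - m) * (x - mu - c)^2 =
     (mu - m) * (M - mu) * c^2 + ((m + M - 2 * mu) * c^2 - 2 * (mu - m) * (M - mu) * c) * (x - mu)
     + ((mu - m) * (M - mu) - 2 * c * (m + M - 2 * mu) - c^2) * (x - mu)^2
     + (m + M - 2 * mu + 2 * c) * (x - mu)^3 - (x - mu)^4"
  by algebra

lemma mom4_le_bound_if_moment_quadratic_nonneg:
  fixes m M mu mu2 mu3 mu4 :: real
  assumes "mu2 \<noteq> (mu - m) * (M - mu)"
    and "\<And>c. 0 \<le> moment_quadratic m M mu mu2 mu3 mu4 c"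
  shows "mu4 \<le> mom4_bound m M mu mu2 mu3"
proof -
  define D where "D = (mu - m) * (M - mu) - mu2"
  define K where "K = (m + M - 2 * mu) * mu2 - mu3"
  define R where "R = (mu - m) * (M - mu) * mu2 + (m + M - 2 * mu) * mu3 - mu4"
  have "D \<noteq> 0" using assms(1) unfolding D_def by simp
  have quadratic: "moment_quadratic m M mu mu2 mu3 mu4 c = D * c^2 - 2 * K * c + R" for c
    unfolding moment_quadratic_def D_def K_def R_def by algebra
  have "moment_quadratic m M mu mu2 mu3 mu4 (K / D) = R - K^2 / D"
    using \<open>D \<noteq> 0\<close> unfolding quadratic by (simp add: field_simps power2_eq_square)
  moreover have "mom4_bound m M mu mu2 mu3 = R + mu4 - K^2 / D"
    unfolding mom4_bound_def D_def K_def R_def by (simp add: power2_commute)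
  ultimately show ?thesis using assms(2)[of "K / D"] by linarith
qed

lemma disc_cmom_0: "(\<Sum>i=1..n. p i) = 1 \<Longrightarrow> disc_cmom 0 n p x = 1"
  by (simp add: disc_cmom_def)

lemma disc_cmom_1:
  assumes "(\<Sum>i=1..n. p i) = 1"
  shows "disc_cmom 1 n p x = 0"
proof -
  have "disc_cmom 1 n p x = (\<Sum>i=1..n. p i * x i) - disc_mean n p x * (\<Sum>i=1..n. p i)"
    unfolding disc_cmom_def by (simp add: algebra_simps sum_subtractf sum_distrib_left)
  then show ?thesis using assms by (simp add: disc_mean_def)
qed

lemma sum_quartic:
  fixes p d :: "'a \<Rightarrow> real"
  shows "(\<Sum>i\<in>S. p i * (A + B * d i + C * d i^2 + E * d i^3 - d i^4)) =
    A * (\<Sum>i\<in>S. p i) + B * (\<Sum>i\<in>S. p i * d i) + C * (\<Sum>i\<in>S. p i * d i^2)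
    + E * (\<Sum>i\<in>S. p i * d i^3) - (\<Sum>i\<in>S. p i * d i^4)"
  by (simp add: sum.distrib sum_subtractf sum_distrib_left algebra_simps)

lemma disc_moment_quadratic:
  assumes "(\<Sum>i=1..n. p i) = 1"
  shows "(\<Sum>i=1..n. p i * ((M - x i) * (x i - m) * (x i - disc_mean n p x - c)^2)) =
    moment_quadratic m M (disc_mean n p x) (disc_cmom 2 n p x) (disc_cmom 3 n p x)
      (disc_cmom 4 n p x) c"
  using disc_cmom_0[OF assms, of x] disc_cmom_1[OF assms, of x]
  unfolding bounded_square_expansion sum_quartic moment_quadratic_def
  by (simp add: disc_cmom_def)

lemma integrable_continuous_times_nonneg:
  fixes f g :: "real \<Rightarrow> real"
  assumes "\<And>t. t \<in> {a..b} \<Longrightarrow> 0 \<le> f t" "f integrable_on {a..b}" "continuous_on {a..b} g"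
  shows "(\<lambda>t. g t * f t) integrable_on {a..b}"
proof -
  have "f absolutely_integrable_on {a..b}"
    using assms by (intro nonnegative_absolutely_integrable_1) auto
  moreover have "bounded (g ` {a..b})"
    by (intro compact_imp_bounded compact_continuous_image assms(3)) simp
  ultimately have "(\<lambda>t. g t * f t) absolutely_integrable_on {a..b}"
    by (intro absolutely_integrable_bounded_measurable_product_real
        continuous_imp_measurable_on_sets_lebesgue assms(3)) auto
  then show ?thesis by (simp add: absolutely_integrable_on_def)
qed

lemma has_integral_cont_cmom:
  assumes "\<And>t. t \<in> {m..M} \<Longrightarrow> 0 \<le> f t" "f integrable_on {m..M}"
  shows "((\<lambda>t. (t - cont_mean m M f)^k * f t) has_integral cont_cmom k m M f) {m..M}"
  unfolding cont_cmom_def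
  by (intro integrable_integral integrable_continuous_times_nonneg assms continuous_intros)

lemma cont_cmom_1:
  assumes "\<And>t. t \<in> {m..M} \<Longrightarrow> 0 \<le> f t" "(f has_integral 1) {m..M}"
  shows "cont_cmom 1 m M f = 0"
proof -
  let ?mu = "cont_mean m M f"
  have "((\<lambda>t. t * f t) has_integral ?mu) {m..M}"
    unfolding cont_mean_def using assms
    by (intro integrable_integral integrable_continuous_times_nonneg continuous_intros) auto
  then have "((\<lambda>t. t * f t - ?mu * f t) has_integral ?mu - ?mu * 1) {m..M}"
    by (intro has_integral_diff has_integral_mult_right assms(2))
  then show ?thesis
    unfolding cont_cmom_def by (simp add: integral_unique left_diff_distrib)
qed

lemma has_integral_quartic:
  fixes f d :: "real \<Rightarrow> real"
  assumes "(f has_integral I0) S" "((\<lambda>t. d t * f t) has_integral I1) S"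
    "((\<lambda>t. d t^2 * f t) has_integral I2) S" "((\<lambda>t. d t^3 * f t) has_integral I3) S"
    "((\<lambda>t. d t^4 * f t) has_integral I4) S"
  shows "((\<lambda>t. (A + B * d t + C * d t^2 + E * d t^3 - d t^4) * f t) has_integral
    A * I0 + B * I1 + C * I2 + E * I3 - I4) S"
proof -
  have "((\<lambda>t. A * f t + B * (d t * f t) + C * (d t^2 * f t) + E * (d t^3 * f t) - d t^4 * f t)
      has_integral A * I0 + B * I1 + C * I2 + E * I3 - I4) S"
    by (intro has_integral_add has_integral_diff has_integral_mult_right assms)
  then show ?thesis by (simp add: algebra_simps)
qed

lemma cont_moment_quadratic:
  assumes "\<And>t. t \<in> {m..M} \<Longrightarrow> 0 \<le> f t" "(f has_integral 1) {m..M}"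
  shows "((\<lambda>t. (M - t) * (t - m) * (t - cont_mean m M f - c)^2 * f t) has_integral
    moment_quadratic m M (cont_mean m M f) (cont_cmom 2 m M f) (cont_cmom 3 m M f)
      (cont_cmom 4 m M f) c) {m..M}"
proof -
  let ?mu = "cont_mean m M f"
  have "f integrable_on {m..M}" using assms(2) by blast
  note moments = has_integral_cont_cmom[OF assms(1) this]
  have "((\<lambda>t. (t - ?mu) * f t) has_integral 0) {m..M}"
    using moments[of 1] cont_cmom_1[OF assms] by simp
  from has_integral_quartic[OF assms(2) this moments moments moments,
      where A = "(?mu - m) * (M - ?mu) * c^2"
        and B = "(m + M - 2 * ?mu) * c^2 - 2 * (?mu - m) * (M - ?mu) * c"
        and C = "(?mu - m) * (M - ?mu) - 2 * c * (m + M - 2 * ?mu) - c^2"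
        and E = "m + M - 2 * ?mu + 2 * c"]
  show ?thesis
    unfolding bounded_square_expansion moment_quadratic_def by simp
qed

theorem theorem2p2:
  fixes m M :: real
  assumes "m < M"
  shows
    "(\<forall>(n::nat) (p::nat \<Rightarrow> real) (x::nat \<Rightarrow> real).
        (\<forall>i\<in>{1..n}. 0 \<le> p i \<and> x i \<in> {m..M}) \<and> (\<Sum>i=1..n. p i) = 1 \<and>
        disc_cmom 2 n p x \<noteq> (disc_mean n p x - m) * (M - disc_mean n p x)
        \<longrightarrow> disc_cmom 4 n p x \<le>
              mom4_bound m M (disc_mean n p x) (disc_cmom 2 n p x) (disc_cmom 3 n p x))
   \<and> (\<forall>f :: real \<Rightarrow> real.
        (\<forall>t\<in>{m..M}. 0 \<le> f t) \<and> (f has_integral 1) {m..M} \<and>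
        cont_cmom 2 m M f \<noteq> (cont_mean m M f - m) * (M - cont_mean m M f)
        \<longrightarrow> cont_cmom 4 m M f \<le>
              mom4_bound m M (cont_mean m M f) (cont_cmom 2 m M f) (cont_cmom 3 m M f))"
proof (intro conjI allI impI; elim conjE)
  fix n and p x :: "nat \<Rightarrow> real"
  assume support: "\<forall>i\<in>{1..n}. 0 \<le> p i \<and> x i \<in> {m..M}"
    and total: "(\<Sum>i=1..n. p i) = 1"
    and "disc_cmom 2 n p x \<noteq> (disc_mean n p x - m) * (M - disc_mean n p x)"
  moreover have "0 \<le> moment_quadratic m M (disc_mean n p x) (disc_cmom 2 n p x)
      (disc_cmom 3 n p x) (disc_cmom 4 n p x) c" for c
    unfolding disc_moment_quadratic[OF total, symmetric]
    using support by (intro sum_nonneg) auto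
  ultimately show "disc_cmom 4 n p x \<le>
      mom4_bound m M (disc_mean n p x) (disc_cmom 2 n p x) (disc_cmom 3 n p x)"
    by (intro mom4_le_bound_if_moment_quadratic_nonneg) auto
next
  fix f :: "real \<Rightarrow> real"
  assume density: "\<forall>t\<in>{m..M}. 0 \<le> f t" "(f has_integral 1) {m..M}"
    and "cont_cmom 2 m M f \<noteq> (cont_mean m M f - m) * (M - cont_mean m M f)"
  moreover have "0 \<le> moment_quadratic m M (cont_mean m M f) (cont_cmom 2 m M f)
      (cont_cmom 3 m M f) (cont_cmom 4 m M f) c" for c
    using density by (intro has_integral_nonneg[OF cont_moment_quadratic]) auto
  ultimately show "cont_cmom 4 m M f \<le>
      mom4_bound m M (cont_mean m M f) (cont_cmom 2 m M f) (cont_cmom 3 m M f)"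
    by (intro mom4_le_bound_if_moment_quadratic_nonneg) auto
qed

end
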